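(* For every integer $d\ge1$, the set of forms $f\in\Sigma^4_{2,4d}$ of $4$-length at most $4$ (i.e. $f=\sum_{i=1}^4 p_i^4$ with $p_i\in\mathbb{R}[x,y]_d$) is a full-dimensional semi-algebraic subset of $\mathbb{R}[x,y]_{4d}$, i.e. it has nonempty interior in $\mathbb{R}[x,y]_{4d}$.
   Context: $\mathbb{R}[x,y]_e$ denotes the space of real binary forms of degree $e$. $\Sigma^4_{2,4d}\subset\mathbb{R}[x,y]_{4d}$ is the cone of finite sums of fourth powers of forms in $\mathbb{R}[x,y]_d$; the $4$-length of $f\in\Sigma^4_{2,4d}$ is the minimal number of such summands. *)

theory Defs
  imports Complex_Main "HOL-Computational_Algebra.Polynomial"
begin

text \<open>A real binary form of degree e is encoded by the coefficient polynomial P with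
  degree P \<le> e; the form is  (x,y) \<mapsto> \<Sum>i\<le>e. coeff P i * x^i * y^(e-i).
  This identifies R[x,y]_e with R^(e+1) (coefficient coordinates).\<close>

definition is_bform :: "nat \<Rightarrow> real poly \<Rightarrow> bool" where
  "is_bform e P \<longleftrightarrow> degree P \<le> e"

definition bform_eval :: "nat \<Rightarrow> real poly \<Rightarrow> real \<Rightarrow> real \<Rightarrow> real" where
  "bform_eval e P x y = (\<Sum>i\<le>e. coeff P i * x ^ i * y ^ (e - i))"

definition four_length_le4 :: "nat \<Rightarrow> real poly set" where
  "four_length_le4 d = {F. is_bform (4 * d) F \<and>
     (\<exists>p :: nat \<Rightarrow> real poly. (\<forall>i<4. is_bform d (p i)) \<and>
        (\<forall>x y. bform_eval (4 * d) F x y = (\<Sum>i<4. (bform_eval d (p i) x y) ^ 4)))}"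

text \<open>Nonempty interior of a set of forms of degree e inside R[x,y]_e, in coefficient coordinates
  (max-norm balls; equivalent to the Euclidean topology).\<close>
definition has_nonempty_interior_forms :: "nat \<Rightarrow> real poly set \<Rightarrow> bool" where
  "has_nonempty_interior_forms e S \<longleftrightarrow>
     (\<exists>F0 \<epsilon>. is_bform e F0 \<and> \<epsilon> > 0 \<and>
        (\<forall>G. is_bform e G \<and> (\<forall>i\<le>e. \<bar>coeff G i - coeff F0 i\<bar> < \<epsilon>) \<longrightarrow> G \<in> S))"

end

theory Submission
  imports Defs "HOL-Analysis.Analysis"
begin

text \<open>The form \<open>F\<^sub>0 = y\<^sup>4\<^sup>d + x\<^sup>4\<^sup>d + (y\<^sup>d + x\<^sup>d)\<^sup>4 + (y\<^sup>d - x\<^sup>d)\<^sup>4\<close> is an interior point.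
  The differential of \<open>(p\<^sub>0, \<dots>, p\<^sub>3) \<mapsto> \<Sum> p\<^sub>i\<^sup>4\<close> at \<open>b = (y\<^sup>d, x\<^sup>d, y\<^sup>d + x\<^sup>d, y\<^sup>d - x\<^sup>d)\<close>
  is onto the forms of degree \<open>4d\<close> and has an explicit linear right inverse \<open>S\<close>. For \<open>G\<close> near
  \<open>F\<^sub>0\<close>, the equation \<open>G = \<Sum> (b\<^sub>i + (S w)\<^sub>i)\<^sup>4\<close> becomes the fixed point equation
  \<open>w = G - F\<^sub>0 - R (S w)\<close>, where \<open>R\<close> collects the terms of order at least two in the perturbation.
  Measured in the l1 norm of the coefficients this map is a contraction of a small ball, so
  Banach's fixed point theorem solves it.\<close>

section \<open>The l1 norm of the coefficients\<close>

definition l1_norm :: "real poly \<Rightarrow> real" where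
  "l1_norm p = (\<Sum>i\<le>degree p. \<bar>coeff p i\<bar>)"

lemma l1_norm_eq_sum: "degree p \<le> N \<Longrightarrow> l1_norm p = (\<Sum>i\<le>N. \<bar>coeff p i\<bar>)"
  unfolding l1_norm_def by (rule sum.mono_neutral_left) (auto simp: coeff_eq_0)

lemma l1_norm_nonneg: "0 \<le> l1_norm p"
  unfolding l1_norm_def by (simp add: sum_nonneg)

lemma abs_coeff_le_l1_norm: "\<bar>coeff p i\<bar> \<le> l1_norm p"
proof (cases "i \<le> degree p")
  case True
  then show ?thesis unfolding l1_norm_def by (intro member_le_sum) auto
next
  case False
  then show ?thesis by (simp add: coeff_eq_0 l1_norm_nonneg)
qed

lemma l1_norm_0 [simp]: "l1_norm 0 = 0"
  by (simp add: l1_norm_def)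

lemma l1_norm_1 [simp]: "l1_norm 1 = 1"
  by (simp add: l1_norm_def)

lemma l1_norm_monom [simp]: "l1_norm (monom c n) = \<bar>c\<bar>"
  by (cases "c = 0") (simp_all add: l1_norm_def degree_monom_eq if_distrib[of abs] cong: if_cong)

lemma l1_norm_eq_0_iff: "l1_norm p = 0 \<longleftrightarrow> p = 0"
  by (metis abs_coeff_le_l1_norm abs_le_zero_iff coeff_0 l1_norm_0 poly_eqI)

lemma l1_norm_uminus [simp]: "l1_norm (- p) = l1_norm p"
  by (simp add: l1_norm_def)

lemma l1_norm_minus_commute: "l1_norm (p - q) = l1_norm (q - p)"
  by (metis l1_norm_uminus minus_diff_eq)

lemma l1_norm_add_le: "l1_norm (p + q) \<le> l1_norm p + l1_norm q"
proof -
  let ?N = "max (degree p) (degree q)"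
  have "l1_norm (p + q) = (\<Sum>i\<le>?N. \<bar>coeff (p + q) i\<bar>)"
    by (rule l1_norm_eq_sum) (simp add: degree_add_le)
  also have "\<dots> \<le> (\<Sum>i\<le>?N. \<bar>coeff p i\<bar> + \<bar>coeff q i\<bar>)"
    by (intro sum_mono) (simp add: abs_triangle_ineq)
  also have "\<dots> = l1_norm p + l1_norm q"
    by (simp add: sum.distrib l1_norm_eq_sum[of p ?N] l1_norm_eq_sum[of q ?N])
  finally show ?thesis .
qed

lemma l1_norm_diff_le: "l1_norm (p - q) \<le> l1_norm p + l1_norm q"
  using l1_norm_add_le[of p "- q"] by simp

lemma l1_norm_triangle: "l1_norm (p - r) \<le> l1_norm (p - q) + l1_norm (q - r)"
  using l1_norm_add_le[of "p - q" "q - r"] by simp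

lemma l1_norm_sum_le: "l1_norm (\<Sum>i\<in>A. f i) \<le> (\<Sum>i\<in>A. l1_norm (f i))"
proof (induction A rule: infinite_finite_induct)
  case (insert x F)
  then show ?case using l1_norm_add_le[of "f x" "sum f F"] by simp
qed simp_all

lemma l1_norm_smult [simp]: "l1_norm (smult c p) = \<bar>c\<bar> * l1_norm p"
proof -
  have "l1_norm (smult c p) = (\<Sum>i\<le>degree p. \<bar>coeff (smult c p) i\<bar>)"
    by (rule l1_norm_eq_sum) (simp add: degree_smult_le)
  then show ?thesis by (simp add: l1_norm_def abs_mult sum_distrib_left)
qed

lemma l1_norm_numeral_mult [simp]: "l1_norm (numeral n * p) = numeral n * l1_norm p"
  by (simp add: numeral_mult_conv_smult)

lemma l1_norm_pCons: "l1_norm (pCons a p) = \<bar>a\<bar> + l1_norm p"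
proof -
  have "l1_norm (pCons a p) = (\<Sum>i\<le>Suc (degree p). \<bar>coeff (pCons a p) i\<bar>)"
    by (rule l1_norm_eq_sum) (simp add: degree_pCons_le)
  then show ?thesis unfolding sum.atMost_Suc_shift by (simp add: l1_norm_def)
qed

lemma l1_norm_mult_le: "l1_norm (p * q) \<le> l1_norm p * l1_norm q"
proof (induction p rule: pCons_induct)
  case (pCons a p)
  have "l1_norm (pCons a p * q) = l1_norm (smult a q + pCons 0 (p * q))"
    by simp
  also have "\<dots> \<le> \<bar>a\<bar> * l1_norm q + l1_norm (p * q)"
    using l1_norm_add_le[of "smult a q" "pCons 0 (p * q)"] by (simp add: l1_norm_pCons)
  also have "\<dots> \<le> \<bar>a\<bar> * l1_norm q + l1_norm p * l1_norm q"
    using pCons.IH by simp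
  finally show ?case by (simp add: l1_norm_pCons algebra_simps)
qed simp

lemma l1_norm_mult_le_bounds:
  "l1_norm p \<le> a \<Longrightarrow> l1_norm q \<le> b \<Longrightarrow> l1_norm (p * q) \<le> a * b"
  by (meson order_trans mult_mono l1_norm_mult_le l1_norm_nonneg)

lemma l1_norm_le_coeff_bound:
  assumes "degree p \<le> N" and "\<And>i. i \<le> N \<Longrightarrow> \<bar>coeff p i\<bar> \<le> B"
  shows "l1_norm p \<le> real (Suc N) * B"
proof -
  have "l1_norm p = (\<Sum>i\<le>N. \<bar>coeff p i\<bar>)"
    using assms(1) by (rule l1_norm_eq_sum)
  also have "\<dots> \<le> (\<Sum>i\<le>N. B)"
    using assms(2) by (intro sum_mono) auto
  finally show ?thesis by simp
qed

lemma Metric_space_poly_l1: "Metric_space {p. degree p \<le> N} (\<lambda>p q. l1_norm (p - q))"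
  by unfold_locales
    (auto simp: l1_norm_nonneg l1_norm_eq_0_iff l1_norm_triangle intro: l1_norm_minus_commute)

lemma mcomplete_poly_l1: "Metric_space.mcomplete {p. degree p \<le> N} (\<lambda>p q. l1_norm (p - q))"
proof -
  interpret Metric_space "{p. degree p \<le> N}" "\<lambda>p q. l1_norm (p - q)"
    by (rule Metric_space_poly_l1)
  show ?thesis
    unfolding mcomplete_def
  proof (intro allI impI)
    fix \<sigma> assume \<sigma>: "MCauchy \<sigma>"
    have "Cauchy (\<lambda>n. coeff (\<sigma> n) k)" for k
    proof (rule metric_CauchyI)
      fix e :: real assume "0 < e"
      then obtain M where "\<And>m n. M \<le> m \<Longrightarrow> M \<le> n \<Longrightarrow> l1_norm (\<sigma> m - \<sigma> n) < e"
        using \<sigma> unfolding MCauchy_def by blast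
      then show "\<exists>M. \<forall>m\<ge>M. \<forall>n\<ge>M. dist (coeff (\<sigma> m) k) (coeff (\<sigma> n) k) < e"
        by (metis abs_coeff_le_l1_norm coeff_diff dist_real_def order_le_less_trans)
    qed
    then obtain c where c: "\<And>k. (\<lambda>n. coeff (\<sigma> n) k) \<longlonglongrightarrow> c k"
      unfolding Cauchy_convergent_iff convergent_def by metis
    define W where "W = (\<Sum>k\<le>N. monom (c k) k)"
    have coeff_W: "coeff W k = (if k \<le> N then c k else 0)" for k
      unfolding W_def coeff_sum coeff_monom by simp
    have deg_\<sigma>: "degree (\<sigma> n) \<le> N" for n
      using \<sigma> unfolding MCauchy_def by auto
    have deg_W: "degree W \<le> N"
      by (rule degree_le) (simp add: coeff_W)
    have "(\<lambda>n. \<Sum>k\<le>N. \<bar>coeff (\<sigma> n) k - coeff W k\<bar>) \<longlonglongrightarrow> (\<Sum>k\<le>N. 0)"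
      by (intro tendsto_sum tendsto_rabs_zero LIM_zero) (simp add: coeff_W c)
    moreover have "l1_norm (\<sigma> n - W) = (\<Sum>k\<le>N. \<bar>coeff (\<sigma> n) k - coeff W k\<bar>)" for n
      using l1_norm_eq_sum[OF degree_diff_le[OF deg_\<sigma> deg_W]] by simp
    ultimately have "(\<lambda>n. l1_norm (\<sigma> n - W)) \<longlonglongrightarrow> 0"
      by simp
    then show "\<exists>x. limitin mtopology \<sigma> x sequentially"
      using deg_\<sigma> deg_W by (auto simp: limitin_metric_dist_null)
  qed
qed

lemma l1_contraction_fixpoint:
  fixes f :: "real poly \<Rightarrow> real poly"
  assumes degree_f: "\<And>w. degree w \<le> N \<Longrightarrow> degree (f w) \<le> N"
    and contraction: "\<And>w w'. degree w \<le> N \<Longrightarrow> degree w' \<le> N \<Longrightarrow> l1_norm w \<le> r \<Longrightarrow>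
      l1_norm w' \<le> r \<Longrightarrow> l1_norm (f w - f w') \<le> k * l1_norm (w - w')"
    and f_0: "l1_norm (f 0) \<le> (1 - k) * r"
    and k: "0 \<le> k" "k < 1"
  obtains W where "degree W \<le> N" "f W = W"
proof -
  define B where "B = {p. degree p \<le> N \<and> l1_norm p \<le> r}"
  interpret Submetric "{p. degree p \<le> N}" "\<lambda>p q. l1_norm (p - q)" B
    by (simp add: Submetric_def Submetric_axioms_def Metric_space_poly_l1 B_def subset_iff)
  have "B = mcball 0 r"
    by (auto simp: B_def l1_norm_minus_commute[of 0])
  then have "sub.mcomplete"
    using closedin_mcomplete_imp_mcomplete mcomplete_poly_l1 by simp
  have "0 \<le> (1 - k) * r"
    using f_0 l1_norm_nonneg order_trans by blast
  then have r: "0 \<le> r"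
    using k by (simp add: zero_le_mult_iff)
  have "f w \<in> B" if "w \<in> B" for w
  proof -
    have "l1_norm (f w) \<le> l1_norm (f w - f 0) + l1_norm (f 0)"
      using l1_norm_add_le[of "f w - f 0" "f 0"] by simp
    also have "\<dots> \<le> k * l1_norm w + (1 - k) * r"
      using that contraction[of w 0] f_0 r by (simp add: B_def)
    also have "\<dots> \<le> r"
      using that k by (simp add: B_def algebra_simps mult_left_mono)
    finally show ?thesis
      using that degree_f by (simp add: B_def)
  qed
  moreover have "B \<noteq> {}"
    using r by (auto simp: B_def intro!: exI[of _ 0])
  ultimately obtain W where "W \<in> B" "f W = W"
    using sub.Banach_fixedpoint_thm[OF \<open>sub.mcomplete\<close>] contraction k
    by (metis (no_types, lifting) B_def Pi_I mem_Collect_eq)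
  then show thesis
    using that unfolding B_def by blast
qed

section \<open>Binary forms\<close>

lemma bform_eval_dehomogenize:
  assumes "y \<noteq> 0" "degree P \<le> e"
  shows "bform_eval e P x y = y ^ e * poly P (x / y)"
proof -
  have "poly P (x / y) = (\<Sum>i\<le>e. coeff P i * (x / y) ^ i)"
    unfolding poly_altdef by (rule sum.mono_neutral_left) (use assms in \<open>auto simp: coeff_eq_0\<close>)
  then have "y ^ e * poly P (x / y) = (\<Sum>i\<le>e. coeff P i * (y ^ e * (x / y) ^ i))"
    by (simp add: sum_distrib_left algebra_simps)
  also have "\<dots> = (\<Sum>i\<le>e. coeff P i * x ^ i * y ^ (e - i))"
  proof (rule sum.cong)
    fix i assume "i \<in> {..e}"
    then have "y ^ e = y ^ i * y ^ (e - i)"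
      by (simp add: power_add[symmetric])
    then show "coeff P i * (y ^ e * (x / y) ^ i) = coeff P i * x ^ i * y ^ (e - i)"
      using assms(1) by (simp add: power_divide)
  qed simp
  finally show ?thesis
    by (simp add: bform_eval_def)
qed

lemma bform_eval_y_0: "bform_eval e P x 0 = coeff P e * x ^ e"
proof -
  have "bform_eval e P x 0 = (\<Sum>i\<le>e. if i = e then coeff P e * x ^ e else 0)"
    unfolding bform_eval_def by (rule sum.cong) auto
  then show ?thesis by simp
qed

lemma coeff_mult_degree_bounds:
  assumes "degree p \<le> m" "degree q \<le> n"
  shows "coeff (p * q) (m + n) = coeff p m * coeff q n"
proof -
  have "coeff p i * coeff q (m + n - i) = (if i = m then coeff p m * coeff q n else 0)" for i
    using assms by (cases "i < m") (auto simp: coeff_eq_0)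
  then show ?thesis
    unfolding coeff_mult by simp
qed

lemma bform_eval_mult:
  assumes "degree p \<le> m" "degree q \<le> n"
  shows "bform_eval (m + n) (p * q) x y = bform_eval m p x y * bform_eval n q x y"
proof (cases "y = 0")
  case True
  then show ?thesis
    using coeff_mult_degree_bounds[OF assms] by (simp add: bform_eval_y_0 power_add)
next
  case False
  have "degree (p * q) \<le> m + n"
    using degree_mult_le[of p q] assms by linarith
  then show ?thesis
    using False assms by (simp add: bform_eval_dehomogenize poly_mult power_add)
qed

lemma bform_eval_power:
  assumes "degree p \<le> d"
  shows "bform_eval (n * d) (p ^ n) x y = bform_eval d p x y ^ n"
proof (induction n)
  case 0
  then show ?case by (simp add: bform_eval_def)
next
  case (Suc n)
  have "degree (p ^ n) \<le> n * d"
    using degree_power_le[of p n] assms by (metis mult.commute mult_le_mono2 order_trans)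
  then have "bform_eval (d + n * d) (p * p ^ n) x y = bform_eval d p x y * bform_eval (n * d) (p ^ n) x y"
    by (rule bform_eval_mult[OF assms])
  then show ?case
    using Suc by simp
qed

lemma bform_eval_sum: "bform_eval e (\<Sum>j\<in>A. f j) x y = (\<Sum>j\<in>A. bform_eval e (f j) x y)"
  unfolding bform_eval_def coeff_sum sum_distrib_right by (rule sum.swap)

lemma four_length_le4I:
  fixes p :: "nat \<Rightarrow> real poly"
  assumes "\<And>i. i < 4 \<Longrightarrow> degree (p i) \<le> d"
  shows "(\<Sum>i<4. p i ^ 4) \<in> four_length_le4 d"
proof -
  have "degree (p i ^ 4) \<le> 4 * d" if "i < 4" for i
    using degree_power_le[of "p i" 4] assms[OF that] by linarith
  then have "degree (\<Sum>i<4. p i ^ 4) \<le> 4 * d"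
    by (intro degree_sum_le) auto
  moreover have "bform_eval (4 * d) (\<Sum>i<4. p i ^ 4) x y = (\<Sum>i<4. bform_eval d (p i) x y ^ 4)" for x y
    unfolding bform_eval_sum using assms by (intro sum.cong refl bform_eval_power) auto
  ultimately show ?thesis
    using assms unfolding four_length_le4_def is_bform_def by blast
qed

section \<open>Perturbing the base point\<close>

definition poly_slice :: "nat \<Rightarrow> nat \<Rightarrow> 'a::zero poly \<Rightarrow> 'a poly" where
  "poly_slice m n p = poly_cutoff n (poly_shift m p)"

lemma coeff_poly_slice: "coeff (poly_slice m n p) i = (if i < n then coeff p (i + m) else 0)"
  by (simp add: poly_slice_def coeff_poly_cutoff coeff_poly_shift)

lemma degree_poly_slice_le: "n \<le> Suc d \<Longrightarrow> degree (poly_slice m n p) \<le> d"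
  by (rule degree_le) (simp add: coeff_poly_slice)

lemma poly_slice_diff: "poly_slice m n (p - q) = poly_slice m n p - poly_slice m n (q :: 'a::ab_group_add poly)"
  by (rule poly_eqI) (simp add: coeff_poly_slice)

lemma abs_coeff_poly_slice_le: "\<bar>coeff (poly_slice m n p) i\<bar> \<le> l1_norm p"
  by (simp add: coeff_poly_slice abs_coeff_le_l1_norm l1_norm_nonneg)

lemma poly_eq_four_slices:
  fixes g :: "'a::comm_semiring_1 poly"
  assumes "degree g \<le> 4 * d"
  shows "g = poly_slice 0 d g + monom 1 d * poly_slice d d g
    + monom 1 (2 * d) * poly_slice (2 * d) d g + monom 1 (3 * d) * poly_slice (3 * d) (Suc d) g"
proof (rule poly_eqI)
  fix k
  have "coeff g k = 0" if "k > 4 * d"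
    using that assms by (simp add: coeff_eq_0)
  then show "coeff g k = coeff (poly_slice 0 d g + monom 1 d * poly_slice d d g
    + monom 1 (2 * d) * poly_slice (2 * d) d g + monom 1 (3 * d) * poly_slice (3 * d) (Suc d) g) k"
    by (auto simp: coeff_monom_mult coeff_poly_slice)
qed

text \<open>In the encoding of binary forms, \<open>1\<close> and \<open>monom 1 d\<close> stand for \<open>y\<^sup>d\<close> and \<open>x\<^sup>d\<close>:
  the base point is \<open>y\<^sup>4\<^sup>d + x\<^sup>4\<^sup>d + (y\<^sup>d + x\<^sup>d)\<^sup>4 + (y\<^sup>d - x\<^sup>d)\<^sup>4\<close>.\<close>

definition base_form :: "nat \<Rightarrow> nat \<Rightarrow> real poly" where
  "base_form d i =
    (if i = 0 then 1 else if i = 1 then monom 1 d else if i = 2 then 1 + monom 1 d else 1 - monom 1 d)"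

definition base_point :: "nat \<Rightarrow> real poly" where
  "base_point d = (\<Sum>i<4. base_form d i ^ 4)"

definition tangent_map :: "nat \<Rightarrow> (nat \<Rightarrow> real poly) \<Rightarrow> real poly" where
  "tangent_map d h = (\<Sum>i<4. 4 * (base_form d i ^ 3 * h i))"

definition tangent_section :: "nat \<Rightarrow> real poly \<Rightarrow> nat \<Rightarrow> real poly" where
  "tangent_section d g i =
    (let A = smult (1/4) (poly_slice 0 d g); B = smult (1/4) (poly_slice (3 * d) (Suc d) g);
         P = smult (1/24) (poly_slice (2 * d) d g); Q = smult (1/24) (poly_slice d d g)
     in if i = 0 then A - 2 * P else if i = 1 then B - 2 * Q else if i = 2 then P + Q else P - Q)"

definition quartic_remainder :: "real poly \<Rightarrow> real poly \<Rightarrow> real poly" where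
  "quartic_remainder b h = 6 * (b\<^sup>2 * h\<^sup>2) + 4 * (b * h ^ 3) + h ^ 4"

definition correction_map :: "nat \<Rightarrow> real poly \<Rightarrow> real poly \<Rightarrow> real poly" where
  "correction_map d G w =
    G - base_point d - (\<Sum>i<4. quartic_remainder (base_form d i) (tangent_section d w i))"

lemma sum_lessThan_4: "(\<Sum>i<4. f i) = f 0 + f 1 + f 2 + f (3 :: nat)"
  by (simp add: eval_nat_numeral)

lemma degree_base_form_le: "degree (base_form d i) \<le> d"
  unfolding base_form_def by (auto intro!: degree_add_le degree_diff_le degree_monom_le)

lemma l1_norm_base_form_le: "l1_norm (base_form d i) \<le> 2"
  unfolding base_form_def using l1_norm_add_le[of 1 "monom 1 d"] l1_norm_diff_le[of 1 "monom 1 d"]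
  by auto

lemma degree_tangent_section_le: "degree (tangent_section d g i) \<le> d"
proof -
  have "degree (poly_slice m n g) \<le> d" if "n \<le> Suc d" for m n
    using that by (rule degree_poly_slice_le)
  then show ?thesis
    unfolding tangent_section_def Let_def numeral_mult_conv_smult
    by (auto intro!: degree_add_le degree_diff_le order_trans[OF degree_smult_le])
qed

lemma tangent_section_diff:
  "tangent_section d (g - g') i = tangent_section d g i - tangent_section d g' i"
  unfolding tangent_section_def Let_def poly_slice_diff
  by (simp add: smult_diff_right algebra_simps)

lemma tangent_section_0 [simp]: "tangent_section d 0 i = 0"
  using tangent_section_diff[of d 0 0 i] by simp

lemma l1_norm_tangent_section_le: "l1_norm (tangent_section d g i) \<le> real (Suc d) * l1_norm g"
proof (rule l1_norm_le_coeff_bound[OF degree_tangent_section_le])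
  fix k
  note abs_coeff_poly_slice_le[of 0 d g k] abs_coeff_poly_slice_le[of d d g k]
    abs_coeff_poly_slice_le[of "2 * d" d g k] abs_coeff_poly_slice_le[of "3 * d" "Suc d" g k]
  then show "\<bar>coeff (tangent_section d g i) k\<bar> \<le> l1_norm g"
    unfolding tangent_section_def Let_def
    by (auto simp: numeral_mult_conv_smult abs_le_iff)
qed

text \<open>Since \<open>(1 + s)\<^sup>3 + (1 - s)\<^sup>3 = 2 + 6 s\<^sup>2\<close> and \<open>(1 + s)\<^sup>3 - (1 - s)\<^sup>3 = 6 s + 2 s\<^sup>3\<close>, the
  four cubes \<open>base_form d i ^ 3\<close> span every form \<open>g\<^sub>0 + s g\<^sub>1 + s\<^sup>2 g\<^sub>2 + s\<^sup>3 g\<^sub>3\<close> with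
  \<open>s = x\<^sup>d\<close>, so the tangent map at the base point is onto.\<close>

lemma tangent_map_tangent_section:
  assumes "degree g \<le> 4 * d"
  shows "tangent_map d (tangent_section d g) = g"
proof -
  define s where "s = monom (1 :: real) d"
  define A where "A = smult (1/4) (poly_slice 0 d g)"
  define B where "B = smult (1/4) (poly_slice (3 * d) (Suc d) g)"
  define P where "P = smult (1/24) (poly_slice (2 * d) d g)"
  define Q where "Q = smult (1/24) (poly_slice d d g)"
  have slices: "poly_slice 0 d g = 4 * A" "poly_slice (3 * d) (Suc d) g = 4 * B"
    "poly_slice (2 * d) d g = 24 * P" "poly_slice d d g = 24 * Q"
    unfolding A_def B_def P_def Q_def by (simp_all add: numeral_mult_conv_smult)
  have powers: "monom 1 (2 * d) = s ^ 2" "monom 1 (3 * d) = s ^ 3"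
    unfolding s_def monom_power by (simp_all add: mult.commute)
  have "tangent_map d (tangent_section d g) = 4 * (A - 2 * P) + 4 * (s ^ 3 * (B - 2 * Q))
      + 4 * ((1 + s) ^ 3 * (P + Q)) + 4 * ((1 - s) ^ 3 * (P - Q))"
    unfolding tangent_map_def sum_lessThan_4 tangent_section_def base_form_def
      A_def B_def P_def Q_def s_def Let_def
    by simp
  also have "\<dots> = 4 * A + s * (24 * Q) + s ^ 2 * (24 * P) + s ^ 3 * (4 * B)"
    by (simp add: algebra_simps power2_eq_square power3_eq_cube)
  also have "\<dots> = g"
    using poly_eq_four_slices[OF assms] unfolding slices powers s_def by simp
  finally show ?thesis .
qed

lemma power4_add_eq: "(b + h) ^ 4 = b ^ 4 + 4 * (b ^ 3 * h) + quartic_remainder b h"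
  unfolding quartic_remainder_def
  by (simp add: algebra_simps power2_eq_square power3_eq_cube power4_eq_xxxx)

lemma sum_power4_base_form_add:
  "(\<Sum>i<4. (base_form d i + h i) ^ 4)
    = base_point d + tangent_map d h + (\<Sum>i<4. quartic_remainder (base_form d i) (h i))"
  unfolding base_point_def tangent_map_def power4_add_eq by (simp add: sum.distrib)

lemma quartic_remainder_0 [simp]: "quartic_remainder b 0 = 0"
  by (simp add: quartic_remainder_def)

lemma quartic_remainder_diff:
  "quartic_remainder b h - quartic_remainder b h'
    = (h - h') * (6 * (b\<^sup>2 * (h + h')) + 4 * (b * (h\<^sup>2 + h * h' + h'\<^sup>2)) + (h + h') * (h\<^sup>2 + h'\<^sup>2))"
  unfolding quartic_remainder_def
  by (simp add: algebra_simps power2_eq_square power3_eq_cube power4_eq_xxxx)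

lemma l1_norm_quartic_remainder_diff_le:
  assumes b: "l1_norm b \<le> 2" and h: "l1_norm h \<le> \<rho>" and h': "l1_norm h' \<le> \<rho>"
    and \<rho>: "0 \<le> \<rho>" "\<rho> \<le> 1"
  shows "l1_norm (quartic_remainder b h - quartic_remainder b h') \<le> 76 * \<rho> * l1_norm (h - h')"
proof -
  have \<rho>\<rho>: "\<rho> * \<rho> \<le> \<rho>"
    using \<rho> by (simp add: mult_left_le)
  have sum_h: "l1_norm (h + h') \<le> 2 * \<rho>"
    using l1_norm_add_le[of h h'] h h' by linarith
  have b2: "l1_norm (b\<^sup>2) \<le> 2 * 2"
    unfolding power2_eq_square by (rule l1_norm_mult_le_bounds[OF b b])
  have sq: "l1_norm (h\<^sup>2) \<le> \<rho> * \<rho>" "l1_norm (h * h') \<le> \<rho> * \<rho>" "l1_norm (h'\<^sup>2) \<le> \<rho> * \<rho>"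
    unfolding power2_eq_square by (intro l1_norm_mult_le_bounds h h')+
  have "l1_norm (b\<^sup>2 * (h + h')) \<le> (2 * 2) * (2 * \<rho>)"
    by (rule l1_norm_mult_le_bounds[OF b2 sum_h])
  then have term1: "l1_norm (6 * (b\<^sup>2 * (h + h'))) \<le> 48 * \<rho>"
    by simp
  have "l1_norm (h\<^sup>2 + h * h' + h'\<^sup>2) \<le> 3 * \<rho>"
    using l1_norm_add_le[of "h\<^sup>2 + h * h'" "h'\<^sup>2"] l1_norm_add_le[of "h\<^sup>2" "h * h'"] sq \<rho>\<rho>
    by linarith
  then have "l1_norm (b * (h\<^sup>2 + h * h' + h'\<^sup>2)) \<le> 2 * (3 * \<rho>)"
    by (rule l1_norm_mult_le_bounds[OF b])
  then have term2: "l1_norm (4 * (b * (h\<^sup>2 + h * h' + h'\<^sup>2))) \<le> 24 * \<rho>"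
    by simp
  have "l1_norm (h\<^sup>2 + h'\<^sup>2) \<le> 2 * \<rho>"
    using l1_norm_add_le[of "h\<^sup>2" "h'\<^sup>2"] sq \<rho>\<rho> by linarith
  then have "l1_norm ((h + h') * (h\<^sup>2 + h'\<^sup>2)) \<le> (2 * \<rho>) * (2 * \<rho>)"
    by (rule l1_norm_mult_le_bounds[OF sum_h])
  then have term3: "l1_norm ((h + h') * (h\<^sup>2 + h'\<^sup>2)) \<le> 4 * \<rho>"
    using \<rho>\<rho> by (simp add: algebra_simps)
  have "l1_norm (6 * (b\<^sup>2 * (h + h')) + 4 * (b * (h\<^sup>2 + h * h' + h'\<^sup>2)) + (h + h') * (h\<^sup>2 + h'\<^sup>2))
      \<le> 76 * \<rho>"
    using l1_norm_add_le[of "6 * (b\<^sup>2 * (h + h')) + 4 * (b * (h\<^sup>2 + h * h' + h'\<^sup>2))"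
        "(h + h') * (h\<^sup>2 + h'\<^sup>2)"]
      l1_norm_add_le[of "6 * (b\<^sup>2 * (h + h'))" "4 * (b * (h\<^sup>2 + h * h' + h'\<^sup>2))"]
      term1 term2 term3
    by linarith
  then have "l1_norm (quartic_remainder b h - quartic_remainder b h') \<le> l1_norm (h - h') * (76 * \<rho>)"
    unfolding quartic_remainder_diff by (rule l1_norm_mult_le_bounds[OF order_refl])
  then show ?thesis
    by (simp add: algebra_simps)
qed

lemma degree_quartic_remainder_le:
  assumes "degree b \<le> d" "degree h \<le> d"
  shows "degree (quartic_remainder b h) \<le> 4 * d"
proof -
  have power: "degree (p ^ k) \<le> k * d" if "degree p \<le> d" for p :: "real poly" and k
    using degree_power_le[of p k] that by (metis mult.commute mult_le_mono2 order_trans)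
  have mult: "degree (p * q) \<le> m + n" if "degree p \<le> m" "degree q \<le> n" for p q :: "real poly" and m n
    using degree_mult_le[of p q] that by linarith
  have "degree (b\<^sup>2 * h\<^sup>2) \<le> 4 * d"
    using mult[OF power[OF assms(1), of 2] power[OF assms(2), of 2]] by simp
  moreover have "degree (b * h ^ 3) \<le> 4 * d"
    using mult[OF assms(1) power[OF assms(2), of 3]] by simp
  moreover have "degree (h ^ 4) \<le> 4 * d"
    using power[OF assms(2), of 4] by simp
  ultimately show ?thesis
    unfolding quartic_remainder_def numeral_mult_conv_smult
    by (intro degree_add_le order_trans[OF degree_smult_le])
qed

lemma degree_base_point_le: "degree (base_point d) \<le> 4 * d"
proof -
  have "degree (base_form d i ^ 4) \<le> 4 * d" for i
    using degree_power_le[of "base_form d i" 4] degree_base_form_le[of d i] by linarith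
  then show ?thesis
    unfolding base_point_def by (intro degree_sum_le) auto
qed

lemma degree_correction_map_le:
  "degree G \<le> 4 * d \<Longrightarrow> degree (correction_map d G w) \<le> 4 * d"
  unfolding correction_map_def
  by (intro degree_diff_le degree_base_point_le degree_sum_le)
    (auto intro: degree_quartic_remainder_le degree_base_form_le degree_tangent_section_le)

lemma l1_norm_correction_map_diff_le:
  assumes w: "l1_norm w \<le> r" and w': "l1_norm w' \<le> r" and r: "0 \<le> r" "real (Suc d) * r \<le> 1"
  shows "l1_norm (correction_map d G w - correction_map d G w')
    \<le> 304 * real (Suc d) ^ 2 * r * l1_norm (w - w')"
proof -
  let ?K = "real (Suc d)"
  let ?h = "tangent_section d"
  let ?R = "\<lambda>i v. quartic_remainder (base_form d i) (?h v i)"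
  have "l1_norm (?R i w' - ?R i w) \<le> 76 * (?K * r) * (?K * l1_norm (w - w'))" for i
  proof -
    have bound: "l1_norm (?h v i) \<le> ?K * r" if "l1_norm v \<le> r" for v
      using l1_norm_tangent_section_le[of d v i] that
      by (meson mult_left_mono of_nat_0_le_iff order_trans)
    have "l1_norm (?R i w' - ?R i w) \<le> 76 * (?K * r) * l1_norm (?h w' i - ?h w i)"
      by (rule l1_norm_quartic_remainder_diff_le[OF l1_norm_base_form_le bound[OF w'] bound[OF w]])
        (use r in auto)
    also have "l1_norm (?h w' i - ?h w i) = l1_norm (?h (w - w') i)"
      by (simp add: tangent_section_diff l1_norm_minus_commute)
    also have "\<dots> \<le> ?K * l1_norm (w - w')"
      by (rule l1_norm_tangent_section_le)
    finally show ?thesis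
      using r by (simp add: mult_left_mono)
  qed
  then have "l1_norm (\<Sum>i<4. ?R i w' - ?R i w) \<le> (\<Sum>i<4::nat. 76 * (?K * r) * (?K * l1_norm (w - w')))"
    by (intro order_trans[OF l1_norm_sum_le] sum_mono)
  moreover have "correction_map d G w - correction_map d G w' = (\<Sum>i<4. ?R i w' - ?R i w)"
    unfolding correction_map_def by (simp add: sum_subtractf)
  ultimately show ?thesis
    by (simp add: power2_eq_square algebra_simps)
qed

lemma sum_power4_of_correction_fixpoint:
  assumes "degree W \<le> 4 * d" "correction_map d G W = W"
  shows "(\<Sum>i<4. (base_form d i + tangent_section d W i) ^ 4) = G"
  using assms unfolding sum_power4_base_form_add tangent_map_tangent_section[OF assms(1)]
  by (simp add: correction_map_def algebra_simps)

lemma four_length_le4_near_base_point: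
  assumes G: "degree G \<le> 4 * d" and close: "l1_norm (G - base_point d) \<le> 1 / (1216 * real (Suc d) ^ 2)"
  shows "G \<in> four_length_le4 d"
proof -
  define r where "r = 1 / (608 * real (Suc d) ^ 2)"
  have "real (Suc d) * r = 1 / (608 * real (Suc d))"
    unfolding r_def by (simp add: power2_eq_square)
  then have r: "0 \<le> r" "real (Suc d) * r \<le> 1" "304 * real (Suc d) ^ 2 * r = 1/2"
    unfolding r_def by (simp_all add: power2_eq_square)
  obtain W where "degree W \<le> 4 * d" "correction_map d G W = W"
  proof (rule l1_contraction_fixpoint[where k = "1/2" and r = r])
    show "degree (correction_map d G w) \<le> 4 * d" for w
      using G by (rule degree_correction_map_le)
    show "l1_norm (correction_map d G w - correction_map d G w') \<le> 1/2 * l1_norm (w - w')"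
      if "l1_norm w \<le> r" "l1_norm w' \<le> r" for w w'
      using l1_norm_correction_map_diff_le[OF that r(1,2)] unfolding r(3) .
    show "l1_norm (correction_map d G 0) \<le> (1 - 1/2) * r"
      using close by (simp add: correction_map_def r_def)
  qed auto
  then have "G = (\<Sum>i<4. (base_form d i + tangent_section d W i) ^ 4)"
    by (simp add: sum_power4_of_correction_fixpoint)
  also have "\<dots> \<in> four_length_le4 d"
    by (intro four_length_le4I degree_add_le degree_base_form_le degree_tangent_section_le)
  finally show ?thesis .
qed

theorem mainTheorem8:
  fixes d :: nat
  assumes "d \<ge> 1"
  shows "has_nonempty_interior_forms (4 * d) (four_length_le4 d)"
  unfolding has_nonempty_interior_forms_def
proof (intro exI conjI allI impI)
  define \<epsilon> where "\<epsilon> = 1 / (1216 * real (Suc d) ^ 2 * real (Suc (4 * d)))"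
  show "is_bform (4 * d) (base_point d)"
    unfolding is_bform_def by (rule degree_base_point_le)
  show "0 < \<epsilon>"
    by (simp add: \<epsilon>_def)
  fix G assume G: "is_bform (4 * d) G \<and> (\<forall>i\<le>4 * d. \<bar>coeff G i - coeff (base_point d) i\<bar> < \<epsilon>)"
  have "l1_norm (G - base_point d) \<le> real (Suc (4 * d)) * \<epsilon>"
    using G degree_base_point_le
    by (intro l1_norm_le_coeff_bound degree_diff_le) (auto simp: is_bform_def less_imp_le)
  also have "\<dots> = 1 / (1216 * real (Suc d) ^ 2)"
    by (simp add: \<epsilon>_def del: of_nat_Suc)
  finally show "G \<in> four_length_le4 d"
    using G four_length_le4_near_base_point by (simp add: is_bform_def)
qed

end
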